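(* Let $c,o$ be vertices with a directed path from $c$ to $o$. Suppose the open loop $M(s)$ is strictly proper with relative degree $\chi=\deg(ap)-\deg(bq)\ge 1$. Then the relative degree of $T_{co}(s)$ (degree of denominator minus degree of numerator, in lowest terms) is $(\delta_{co}+1)\chi$.
   Context: $\mathcal G$ is a weighted directed graph on $\{1,\dots,N\}$ with adjacency matrix $A=[a_{ij}]$. Here $a_{ij}>0$ if there is an arc from $j$ to $i$ and $a_{ij}=0$ otherwise (no self-loops). The Laplacian is $L=D-A$ with $D=\mathrm{diag}(\sum_j a_{ij})$. A directed path from $u$ to $w$ is a sequence of distinct vertices $u=v_0,\dots,v_\ell=w$ with an arc from $v_k$ to $v_{k+1}$ for each $k$, and $\ell$ is its length. $\delta_{uw}$ is the length of a shortest directed path from $u$ to $w$. $e_i$ is the $i$-th canonical basis vector. Let $a,b,p,q$ be nonzero real polynomials and $M(s)=\frac{b(s)q(s)}{a(s)p(s)}$. The network is $y=M(s)[-Ly+r]$. $T_{co}(s)=e_o^T(I+M(s)L)^{-1}M(s)e_c$ is the transfer function from $r_c$ to $y_o$ with all other inputs zero. *)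

theory Defs
  imports "HOL-Analysis.Analysis" "HOL-Computational_Algebra.Computational_Algebra"
begin

type_synonym ratfun = "real poly fract"

definition rconst :: "real \<Rightarrow> ratfun" where
  "rconst x = to_fract [:x:]"

definition rel_deg :: "ratfun \<Rightarrow> int" where
  "rel_deg f = (THE r. \<exists>n d. n \<noteq> 0 \<and> d \<noteq> 0 \<and> coprime n d \<and> f = Fract n d \<and>
                        r = int (degree d) - int (degree n))"

(* weighted digraph: A $ i $ j > 0 iff arc from j to i *)
definition laplacian :: "real^'n^'n \<Rightarrow> real^'n^'n" where
  "laplacian A = (\<chi> i j. (if i = j then (\<Sum>k\<in>UNIV. A $ i $ k) else 0) - A $ i $ j)"

definition is_dpath :: "real^'n^'n \<Rightarrow> 'n \<Rightarrow> 'n \<Rightarrow> 'n list \<Rightarrow> bool" where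
  "is_dpath A u w vs \<longleftrightarrow> vs \<noteq> [] \<and> hd vs = u \<and> last vs = w \<and> distinct vs \<and>
     (\<forall>k. Suc k < length vs \<longrightarrow> A $ (vs ! Suc k) $ (vs ! k) > 0)"

definition dist_path :: "real^'n^'n \<Rightarrow> 'n \<Rightarrow> 'n \<Rightarrow> nat" where
  "dist_path A u w = (LEAST l. \<exists>vs. is_dpath A u w vs \<and> length vs = Suc l)"

definition openloop :: "real poly \<Rightarrow> real poly \<Rightarrow> real poly \<Rightarrow> real poly \<Rightarrow> ratfun" where
  "openloop a b p q = Fract (b * q) (a * p)"

definition transfer :: "ratfun \<Rightarrow> real^'n^'n \<Rightarrow> 'n \<Rightarrow> 'n \<Rightarrow> ratfun" where
  "transfer M L c ob =
     (matrix_inv (mat 1 + (\<chi> i j. M * rconst (L $ i $ j))) **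
        (\<chi> i j. if i = j then M else 0)) $ ob $ c"

end

theory Submission
  imports Defs "HOL-Computational_Algebra.Field_as_Ring"
begin

(* Measure rational functions by their valuation at infinity, deg(denominator) - deg(numerator):
   it is additive on products and ultrametric on sums, and a strictly proper M has valuation
   chi >= 1.  The column y of (I + M L)^-1 through c solves y = e_c - M L y, and a
   minimal-valuation argument shows that all entries of y have valuation >= 0.  Unrolling the
   equation gives y = sum_{k<m} (-M)^k L^k e_c + (-M)^m L^m y.  Along a shortest path the
   diagonal of L never contributes, so (L^k)_oc vanishes for k < delta_co and equals
   (-1)^delta (A^delta)_oc > 0 for k = delta_co.  Hence T_co = M y_o is dominated by the single
   term M (-M)^delta (L^delta)_oc, of valuation (delta + 1) chi. *)

section \<open>Valuation at infinity\<close>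

definition val_inf :: "ratfun \<Rightarrow> int" where
  "val_inf f = int (degree (snd (quot_of_fract f))) - int (degree (fst (quot_of_fract f)))"

definition val_ge :: "int \<Rightarrow> ratfun \<Rightarrow> bool" where
  "val_ge k f \<longleftrightarrow> f = 0 \<or> k \<le> val_inf f"

lemma val_inf_Fract:
  assumes "n \<noteq> 0" "d \<noteq> 0"
  shows "val_inf (Fract n d) = int (degree d) - int (degree n)"
proof -
  obtain n' d' where q: "quot_of_fract (Fract n d) = (n', d')"
    by (cases "quot_of_fract (Fract n d)")
  have d': "d' \<noteq> 0" using snd_quot_of_fract_nonzero[of "Fract n d"] q by simp
  have "Fract n' d' = Fract n d" using Fract_quot_of_fract[of "Fract n d"] q by simp
  hence cross: "n' * d = n * d'" using d' assms by (simp add: eq_fract)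
  hence "n' \<noteq> 0" using assms d' by auto
  hence "degree n' + degree d = degree n + degree d'"
    using cross d' assms by (metis degree_mult_eq)
  thus ?thesis using q by (simp add: val_inf_def)
qed

lemma val_inf_0 [simp]: "val_inf 0 = 0"
  by (simp add: val_inf_def)

lemma rel_deg_eq_val_inf:
  assumes "f \<noteq> 0"
  shows "rel_deg f = val_inf f"
  unfolding rel_deg_def
proof (rule the_equality)
  show "\<exists>n d. n \<noteq> 0 \<and> d \<noteq> 0 \<and> coprime n d \<and> f = Fract n d \<and>
          val_inf f = int (degree d) - int (degree n)"
    using assms coprime_quot_of_fract[of f]
    by (intro exI[of _ "fst (quot_of_fract f)"] exI[of _ "snd (quot_of_fract f)"])
       (simp add: val_inf_def)
next
  fix r assume "\<exists>n d. n \<noteq> 0 \<and> d \<noteq> 0 \<and> coprime n d \<and> f = Fract n d \<and>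
          r = int (degree d) - int (degree n)"
  thus "r = val_inf f" using val_inf_Fract by auto
qed

lemma val_inf_mult:
  assumes "f \<noteq> 0" "g \<noteq> 0"
  shows "val_inf (f * g) = val_inf f + val_inf g"
proof -
  obtain a b where "f = Fract a b" "b \<noteq> 0" "a \<noteq> 0"
    using assms(1) by (cases f rule: Fract_cases_nonzero) auto
  moreover obtain c d where "g = Fract c d" "d \<noteq> 0" "c \<noteq> 0"
    using assms(2) by (cases g rule: Fract_cases_nonzero) auto
  ultimately show ?thesis by (simp add: val_inf_Fract degree_mult_eq)
qed

lemma val_inf_uminus [simp]: "val_inf (- f) = val_inf f"
proof (cases "f = 0")
  case False
  then obtain a b where "f = Fract a b" "b \<noteq> 0" "a \<noteq> 0"
    by (cases f rule: Fract_cases_nonzero) auto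
  thus ?thesis by (simp add: val_inf_Fract)
qed simp

lemma val_inf_1 [simp]: "val_inf 1 = 0"
  by (simp add: val_inf_def)

lemma val_inf_power: "f \<noteq> 0 \<Longrightarrow> val_inf (f ^ n) = int n * val_inf f"
  by (induction n) (auto simp: val_inf_mult algebra_simps)

lemma val_ge_add:
  assumes "val_ge k f" "val_ge k g"
  shows "val_ge k (f + g)"
proof (cases "f = 0 \<or> g = 0")
  case True thus ?thesis using assms by auto
next
  case False
  obtain a b where f: "f = Fract a b" "b \<noteq> 0" "a \<noteq> 0"
    using False by (cases f rule: Fract_cases_nonzero) auto
  obtain c d where g: "g = Fract c d" "d \<noteq> 0" "c \<noteq> 0"
    using False by (cases g rule: Fract_cases_nonzero) auto
  have sum: "f + g = Fract (a * d + c * b) (b * d)" using f g by simp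
  show ?thesis
  proof (cases "a * d + c * b = 0")
    case True thus ?thesis using sum by (simp add: val_ge_def Zero_fract_def eq_fract)
  next
    case num_nz: False
    have "k \<le> int (degree b) - int (degree a)" "k \<le> int (degree d) - int (degree c)"
      using assms False f g by (simp_all add: val_ge_def val_inf_Fract)
    moreover have "degree (a * d + c * b) \<le> max (degree a + degree d) (degree c + degree b)"
      using degree_add_le_max[of "a * d" "c * b"] f g by (simp add: degree_mult_eq)
    ultimately have "k \<le> val_inf (f + g)"
      using sum f g num_nz by (simp add: val_inf_Fract degree_mult_eq)
    thus ?thesis by (simp add: val_ge_def)
  qed
qed

lemma val_ge_0 [simp]: "val_ge k 0"
  by (simp add: val_ge_def)

lemma val_ge_self: "val_ge (val_inf f) f"
  by (simp add: val_ge_def)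

lemma val_ge_mono: "val_ge k f \<Longrightarrow> l \<le> k \<Longrightarrow> val_ge l f"
  by (auto simp: val_ge_def)

lemma val_ge_uminus [simp]: "val_ge k (- f) \<longleftrightarrow> val_ge k f"
  by (auto simp: val_ge_def)

lemma val_ge_diff: "val_ge k f \<Longrightarrow> val_ge k g \<Longrightarrow> val_ge k (f - g)"
  using val_ge_add[of k f "- g"] by simp

lemma val_ge_mult: "val_ge k f \<Longrightarrow> val_ge l g \<Longrightarrow> val_ge (k + l) (f * g)"
  unfolding val_ge_def by (cases "f = 0"; cases "g = 0") (auto simp: val_inf_mult)

lemma val_ge_sum: "(\<And>x. x \<in> S \<Longrightarrow> val_ge k (f x)) \<Longrightarrow> val_ge k (sum f S)"
  by (induction S rule: infinite_finite_induct) (auto intro: val_ge_add)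

lemma val_inf_add_dominant:
  assumes "f \<noteq> 0" and "val_ge (val_inf f + 1) g"
  shows "f + g \<noteq> 0 \<and> val_inf (f + g) = val_inf f"
proof -
  have not_higher: "\<not> val_ge (val_inf f + 1) f" using assms(1) by (simp add: val_ge_def)
  have "f + g \<noteq> 0"
  proof
    assume "f + g = 0"
    hence "f = - g" by (simp add: eq_neg_iff_add_eq_0)
    thus False using not_higher assms(2) by simp
  qed
  moreover have "val_ge (val_inf f) (f + g)"
    using val_ge_add[OF val_ge_self val_ge_mono[OF assms(2)]] by simp
  moreover have "\<not> val_ge (val_inf f + 1) (f + g)"
    using val_ge_diff[of _ "f + g" g] assms(2) not_higher by force
  ultimately show ?thesis by (simp add: val_ge_def)
qed

lemma rconst_0 [simp]: "rconst 0 = 0"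
  by (simp add: rconst_def)

lemma rconst_1 [simp]: "rconst 1 = 1"
  by (simp add: rconst_def one_pCons[symmetric])

lemma rconst_eq_0_iff [simp]: "rconst x = 0 \<longleftrightarrow> x = 0"
  by (simp add: rconst_def)

lemma rconst_add: "rconst (x + y) = rconst x + rconst y"
  unfolding rconst_def to_fract_add[symmetric] by simp

lemma rconst_mult: "rconst (x * y) = rconst x * rconst y"
  unfolding rconst_def to_fract_mult[symmetric] by simp

lemma rconst_sum: "rconst (sum f S) = (\<Sum>x\<in>S. rconst (f x))"
  by (induction S rule: infinite_finite_induct) (auto simp: rconst_add)

lemma val_inf_rconst [simp]: "val_inf (rconst x) = 0"
  by (simp add: val_inf_def rconst_def)

lemma val_ge_rconst: "val_ge 0 (rconst x)"
  by (simp add: val_ge_def)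

section \<open>The feedback equation over rational functions\<close>

definition mat_act :: "real^'n^'n \<Rightarrow> ('n \<Rightarrow> ratfun) \<Rightarrow> 'n \<Rightarrow> ratfun" where
  "mat_act L z i = (\<Sum>j\<in>UNIV. rconst (L $ i $ j) * z j)"

fun walk_weight :: "real^'n^'n \<Rightarrow> 'n \<Rightarrow> nat \<Rightarrow> 'n \<Rightarrow> real" where
  "walk_weight L c 0 i = (if i = c then 1 else 0)"
| "walk_weight L c (Suc k) i = (\<Sum>j\<in>UNIV. L $ i $ j * walk_weight L c k j)"

lemma val_ge_mat_act: "(\<And>j. val_ge k (z j)) \<Longrightarrow> val_ge k (mat_act L z i)"
  unfolding mat_act_def using val_ge_mult[OF val_ge_rconst] by (intro val_ge_sum) fastforce

lemma val_ge_funpow_mat_act: "(\<And>j. val_ge k (z j)) \<Longrightarrow> val_ge k ((mat_act L ^^ m) z i)"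
  by (induction m arbitrary: i) (auto intro: val_ge_mat_act)

(* If some entry had valuation < k, the entry of least valuation mu would, by the equation,
   have valuation >= min k (mu + 1). *)
lemma val_ge_feedback_solution:
  assumes M: "1 \<le> val_inf M"
    and e: "\<And>i. val_ge k (e i)"
    and z: "\<And>i. z i = e i - M * mat_act L z i"
  shows "val_ge k (z i)"
proof (rule ccontr)
  assume "\<not> val_ge k (z i)"
  then obtain i0 where i0: "\<not> val_ge k (z i0)"
    and least: "\<And>j. \<not> val_ge k (z j) \<Longrightarrow> val_inf (z i0) \<le> val_inf (z j)"
    using ex_min_if_finite[of "(\<lambda>j. val_inf (z j)) ` {j. \<not> val_ge k (z j)}"]
    by (fastforce simp: not_less)
  define \<mu> where "\<mu> = val_inf (z i0)"
  have "\<mu> < k" using i0 by (simp add: val_ge_def \<mu>_def)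
  hence "val_ge \<mu> (z j)" for j
    using least[of j] by (cases "val_ge k (z j)") (auto simp: val_ge_def \<mu>_def)
  hence "val_ge (val_inf M + \<mu>) (M * mat_act L z i0)"
    by (intro val_ge_mult val_ge_self val_ge_mat_act)
  hence "val_ge (min k (\<mu> + 1)) (e i0 - M * mat_act L z i0)"
    using M by (intro val_ge_diff) (auto intro: val_ge_mono e)
  thus False using z[of i0] i0 \<open>\<mu> < k\<close> by (simp add: val_ge_def \<mu>_def)
qed

lemma feedback_matrix_mult_vec:
  "((mat 1 + (\<chi> i j. M * rconst (L $ i $ j))) *v x) $ i = x $ i + M * mat_act L (($) x) i"
proof -
  have "(\<Sum>j\<in>UNIV. (if i = j then 1 else 0) * x $ j) = x $ i"
    by (simp add: if_distrib[of "\<lambda>t. t * x $ j" for j] sum.delta cong: if_cong)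
  thus ?thesis
    by (simp add: matrix_vector_mult_def mat_act_def mat_def distrib_right sum.distrib
        sum_distrib_left mult.assoc)
qed

lemma feedback_matrix_invertible:
  assumes "1 \<le> val_inf M"
  shows "invertible (mat 1 + (\<chi> i j. M * rconst (L $ i $ j)))"
proof -
  have "x = 0" if "(mat 1 + (\<chi> i j. M * rconst (L $ i $ j))) *v x = 0" for x
  proof -
    have eq: "x $ i = 0 - M * mat_act L (($) x) i" for i
      using that feedback_matrix_mult_vec[of M L x i] by (simp add: eq_neg_iff_add_eq_0)
    have "val_ge (val_inf (x $ i) + 1) (x $ i)" for i
      by (rule val_ge_feedback_solution[OF assms _ eq]) simp
    thus "x = 0" by (simp add: vec_eq_iff val_ge_def)
  qed
  thus ?thesis
    by (simp add: invertible_left_inverse matrix_left_invertible_ker)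
qed

lemma transfer_eq_column:
  assumes "1 \<le> val_inf M"
  obtains y where "\<And>i. y i = rconst (walk_weight L c 0 i) - M * mat_act L y i"
    and "transfer M L c ob = M * y ob"
proof
  define B where "B = mat 1 + (\<chi> i j. M * rconst (L $ i $ j))"
  define y where "y i = matrix_inv B $ i $ c" for i
  have "B ** matrix_inv B = mat 1 \<and> matrix_inv B ** B = mat 1"
    unfolding matrix_inv_def
    by (rule someI_ex) (use feedback_matrix_invertible[OF assms] in \<open>simp add: B_def invertible_def\<close>)
  hence "(B ** matrix_inv B) $ i $ c = rconst (walk_weight L c 0 i)" for i
    by (simp add: mat_def)
  moreover have "(B ** matrix_inv B) $ i $ c = y i + M * mat_act L y i" for i
  proof -
    have "(B ** matrix_inv B) $ i $ c = (B *v (\<chi> j. y j)) $ i"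
      by (simp add: y_def matrix_matrix_mult_def matrix_vector_mult_def)
    thus ?thesis unfolding B_def feedback_matrix_mult_vec by (simp add: vec_lambda_inverse)
  qed
  ultimately show "y i = rconst (walk_weight L c 0 i) - M * mat_act L y i" for i
    by (simp add: algebra_simps)
  have "transfer M L c ob = (\<Sum>j\<in>UNIV. if j = c then matrix_inv B $ ob $ j * M else 0)"
    by (simp add: transfer_def matrix_matrix_mult_def B_def if_distrib cong: if_cong)
  thus "transfer M L c ob = M * y ob"
    by (simp add: y_def mult.commute)
qed

lemma feedback_step:
  assumes "\<And>i. y i = rconst (walk_weight L c 0 i) - M * mat_act L y i"
  shows "(mat_act L ^^ m) y i = rconst (walk_weight L c m i) - M * (mat_act L ^^ Suc m) y i"
proof (induction m arbitrary: i)
  case 0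
  have "(mat_act L ^^ Suc 0) y = mat_act L y" by simp
  thus ?case using assms[of i] by (simp only: funpow_0)
next
  case (Suc m)
  have "(mat_act L ^^ Suc m) y i = mat_act L ((mat_act L ^^ m) y) i"
    by simp
  also have "\<dots> = (\<Sum>j\<in>UNIV. rconst (L $ i $ j) *
                    (rconst (walk_weight L c m j) - M * (mat_act L ^^ Suc m) y j))"
    unfolding mat_act_def[of L "(mat_act L ^^ m) y" i] Suc.IH ..
  also have "\<dots> = rconst (walk_weight L c (Suc m) i) - M * mat_act L ((mat_act L ^^ Suc m) y) i"
    by (simp add: mat_act_def right_diff_distrib sum_subtractf rconst_sum rconst_mult
        sum_distrib_left mult.left_commute del: funpow.simps)
  finally show ?case by simp
qed

lemma neumann_expansion:
  assumes "\<And>i. y i = rconst (walk_weight L c 0 i) - M * mat_act L y i"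
  shows "y i = (\<Sum>k<m. (- M) ^ k * rconst (walk_weight L c k i))
                 + (- M) ^ m * (mat_act L ^^ m) y i"
proof (induction m)
  case (Suc m)
  have "(- M) ^ m * (mat_act L ^^ m) y i
      = (- M) ^ m * rconst (walk_weight L c m i) + (- M) ^ Suc m * (mat_act L ^^ Suc m) y i"
    by (subst feedback_step[OF assms]) (simp add: algebra_simps del: funpow.simps)
  thus ?case using Suc.IH by (simp del: funpow.simps)
qed simp

lemma val_inf_transfer:
  assumes M: "1 \<le> val_inf M"
    and below: "\<And>k. k < d \<Longrightarrow> walk_weight L c k ob = 0"
    and at: "walk_weight L c d ob \<noteq> 0"
  shows "transfer M L c ob \<noteq> 0 \<and> val_inf (transfer M L c ob) = (int d + 1) * val_inf M"
proof -
  have "M \<noteq> 0" and "- M \<noteq> 0" using M by auto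
  obtain y where y: "\<And>i. y i = rconst (walk_weight L c 0 i) - M * mat_act L y i"
    and T: "transfer M L c ob = M * y ob"
    using transfer_eq_column[OF M] by metis
  have "val_ge 0 (y i)" for i
    using val_ge_feedback_solution[OF M _ y] by (simp add: val_ge_rconst)
  hence R: "val_ge 0 ((mat_act L ^^ Suc d) y ob)"
    by (rule val_ge_funpow_mat_act)
  define lead where "lead = M * (- M) ^ d * rconst (walk_weight L c d ob)"
  define rest where "rest = M * (- M) ^ Suc d * (mat_act L ^^ Suc d) y ob"
  have y_ob: "y ob = (- M) ^ d * rconst (walk_weight L c d ob)
                      + (- M) ^ Suc d * (mat_act L ^^ Suc d) y ob"
    using neumann_expansion[OF y, of ob "Suc d"] below by simp
  have T_split: "transfer M L c ob = lead + rest"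
    unfolding T y_ob lead_def rest_def by (simp only: distrib_left mult.assoc)
  have lead_nz: "lead \<noteq> 0" unfolding lead_def using \<open>M \<noteq> 0\<close> at by simp
  have val_lead: "val_inf lead = (int d + 1) * val_inf M"
    unfolding lead_def using \<open>M \<noteq> 0\<close> \<open>- M \<noteq> 0\<close> at
    by (simp add: val_inf_mult val_inf_power algebra_simps)
  have "val_ge (int (Suc d) * val_inf M) ((- M) ^ Suc d)"
    using \<open>- M \<noteq> 0\<close> by (simp add: val_ge_def val_inf_power del: power_Suc)
  hence "val_ge (val_inf M + int (Suc d) * val_inf M + 0) rest"
    unfolding rest_def by (rule val_ge_mult[OF val_ge_mult[OF val_ge_self] R])
  hence "val_ge (val_inf lead + 1) rest"
    by (rule val_ge_mono) (use M val_lead in \<open>simp add: algebra_simps\<close>)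
  thus ?thesis
    using val_inf_add_dominant[OF lead_nz] T_split val_lead by simp
qed

section \<open>Walk weights of a digraph and of its Laplacian\<close>

lemma is_dpath_take:
  fixes A :: "real^'n^'n"
  assumes "is_dpath A c w vs" "n < length vs"
  shows "is_dpath A c (vs ! n) (take (Suc n) vs)"
proof -
  have "last (take (Suc n) vs) = vs ! n"
    using assms(2) by (simp add: take_Suc_conv_app_nth)
  thus ?thesis using assms by (auto simp: is_dpath_def hd_take)
qed

lemma is_dpath_snoc:
  fixes A :: "real^'n^'n"
  assumes "is_dpath A c j vs" "i \<notin> set vs" "0 < A $ i $ j"
  shows "is_dpath A c i (vs @ [i])"
  unfolding is_dpath_def
proof (intro conjI allI impI)
  fix k assume k: "Suc k < length (vs @ [i])"
  show "0 < A $ ((vs @ [i]) ! Suc k) $ ((vs @ [i]) ! k)"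
  proof (cases "Suc k < length vs")
    case True thus ?thesis using assms(1) by (simp add: is_dpath_def nth_append)
  next
    case False
    hence "Suc k = length vs" using k by simp
    moreover have "vs ! k = j"
      using assms(1) \<open>Suc k = length vs\<close> unfolding is_dpath_def
      by (metis diff_Suc_1 last_conv_nth)
    ultimately show ?thesis using assms(3) by (simp add: nth_append)
  qed
qed (use assms in \<open>auto simp: is_dpath_def\<close>)

lemma dpath_extend:
  fixes A :: "real^'n^'n"
  assumes "is_dpath A c j vs" "0 < A $ i $ j"
  shows "\<exists>ws. is_dpath A c i ws \<and> length ws \<le> Suc (length vs)"
proof (cases "i \<in> set vs")
  case True
  then obtain n where "n < length vs" "vs ! n = i" by (auto simp: in_set_conv_nth)
  thus ?thesis using is_dpath_take[OF assms(1)] by force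
next
  case False
  thus ?thesis using is_dpath_snoc[OF assms(1) False assms(2)] by force
qed

lemma walk_weight_laplacian_ne_0_imp_dpath:
  fixes A :: "real^'n^'n"
  assumes nonneg: "\<forall>i j. A $ i $ j \<ge> 0"
  shows "walk_weight (laplacian A) c k i \<noteq> 0 \<Longrightarrow> \<exists>vs. is_dpath A c i vs \<and> length vs \<le> Suc k"
proof (induction k arbitrary: i)
  case 0
  hence "is_dpath A c i [c]" by (simp add: is_dpath_def split: if_splits)
  thus ?case by force
next
  case (Suc k)
  then obtain j where j: "laplacian A $ i $ j * walk_weight (laplacian A) c k j \<noteq> 0"
    by (auto elim: sum.not_neutral_contains_not_neutral)
  then obtain vs where vs: "is_dpath A c j vs" "length vs \<le> Suc k"
    using Suc.IH by fastforce
  show ?case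
  proof (cases "j = i")
    case True thus ?thesis using vs by auto
  next
    case False
    hence "0 < A $ i $ j" using j nonneg by (simp add: laplacian_def order_less_le)
    thus ?thesis using dpath_extend[OF vs(1)] vs(2) by fastforce
  qed
qed

(* Without a path of at most k vertices from c to i, the diagonal part of the Laplacian
   never contributes, so only the off-diagonal entries -A_ij enter. *)
lemma walk_weight_laplacian_eq_signed:
  fixes A :: "real^'n^'n"
  assumes nonneg: "\<forall>i j. A $ i $ j \<ge> 0" and noloop: "\<forall>i. A $ i $ i = 0"
  shows "(\<And>vs. is_dpath A c i vs \<Longrightarrow> k < length vs) \<Longrightarrow>
         walk_weight (laplacian A) c k i = (-1) ^ k * walk_weight A c k i"
proof (induction k arbitrary: i)
  case (Suc k)
  have "laplacian A $ i $ j * walk_weight (laplacian A) c k j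
        = - (A $ i $ j * ((-1) ^ k * walk_weight A c k j))" for j
  proof (cases "j = i")
    case True
    have "walk_weight (laplacian A) c k i = 0"
      using walk_weight_laplacian_ne_0_imp_dpath[OF nonneg] Suc.prems by fastforce
    thus ?thesis using True noloop by simp
  next
    case False
    show ?thesis
    proof (cases "A $ i $ j = 0")
      case True thus ?thesis using False by (simp add: laplacian_def)
    next
      case nz: False
      hence "0 < A $ i $ j" using nonneg by (simp add: order_less_le)
      hence "k < length vs" if "is_dpath A c j vs" for vs
        using dpath_extend[OF that] Suc.prems by fastforce
      thus ?thesis using Suc.IH False by (simp add: laplacian_def)
    qed
  qed
  thus ?case by (simp add: sum_negf sum_distrib_left algebra_simps)
qed simp

lemma walk_weight_nonneg:
  fixes A :: "real^'n^'n"
  assumes "\<forall>i j. A $ i $ j \<ge> 0"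
  shows "0 \<le> walk_weight A c k i"
  by (induction k arbitrary: i) (auto intro!: sum_nonneg simp: assms)

lemma walk_weight_pos_dpath:
  fixes A :: "real^'n^'n"
  assumes nonneg: "\<forall>i j. A $ i $ j \<ge> 0"
  shows "is_dpath A c w vs \<Longrightarrow> length vs = Suc k \<Longrightarrow> 0 < walk_weight A c k w"
proof (induction k arbitrary: w vs)
  case 0
  thus ?case by (cases vs) (auto simp: is_dpath_def)
next
  case (Suc k)
  have w: "vs ! Suc k = w" using Suc.prems by (auto simp: is_dpath_def last_conv_nth)
  have "0 < walk_weight A c k (vs ! k)"
    using Suc.IH[OF is_dpath_take[OF Suc.prems(1)]] Suc.prems(2) by simp
  moreover have "0 < A $ (vs ! Suc k) $ (vs ! k)"
    using Suc.prems unfolding is_dpath_def by simp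
  hence "0 < A $ w $ (vs ! k)" using w by simp
  ultimately have "0 < A $ w $ (vs ! k) * walk_weight A c k (vs ! k)" by simp
  also have "\<dots> \<le> (\<Sum>j\<in>UNIV. A $ w $ j * walk_weight A c k j)"
    by (rule member_le_sum) (auto intro!: mult_nonneg_nonneg walk_weight_nonneg simp: nonneg)
  finally show ?case by simp
qed

lemma dist_path_lt_length:
  fixes A :: "real^'n^'n"
  assumes "is_dpath A c w vs"
  shows "dist_path A c w < length vs"
proof -
  obtain l where "length vs = Suc l" using assms by (cases vs) (auto simp: is_dpath_def)
  hence "dist_path A c w \<le> l" unfolding dist_path_def using assms by (blast intro: Least_le)
  thus ?thesis using \<open>length vs = Suc l\<close> by simp
qed

lemma dist_path_attained:
  fixes A :: "real^'n^'n"
  assumes "is_dpath A c w vs"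
  shows "\<exists>ws. is_dpath A c w ws \<and> length ws = Suc (dist_path A c w)"
proof -
  have "length vs = Suc (length vs - 1)" using assms by (cases vs) (auto simp: is_dpath_def)
  show ?thesis unfolding dist_path_def
    by (rule LeastI_ex) (use assms \<open>length vs = Suc (length vs - 1)\<close> in blast)
qed

lemma walk_weight_laplacian_below_dist:
  fixes A :: "real^'n^'n"
  assumes "\<forall>i j. A $ i $ j \<ge> 0" and "k < dist_path A c w"
  shows "walk_weight (laplacian A) c k w = 0"
  using walk_weight_laplacian_ne_0_imp_dpath[OF assms(1)] dist_path_lt_length assms(2)
  by (meson leD less_trans_Suc)

lemma walk_weight_laplacian_at_dist:
  fixes A :: "real^'n^'n"
  assumes nonneg: "\<forall>i j. A $ i $ j \<ge> 0" and noloop: "\<forall>i. A $ i $ i = 0"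
    and "is_dpath A c w vs"
  shows "walk_weight (laplacian A) c (dist_path A c w) w \<noteq> 0"
proof -
  obtain ws where "is_dpath A c w ws" "length ws = Suc (dist_path A c w)"
    using dist_path_attained[OF assms(3)] by blast
  hence "0 < walk_weight A c (dist_path A c w) w"
    by (rule walk_weight_pos_dpath[OF nonneg])
  moreover have "walk_weight (laplacian A) c (dist_path A c w) w
               = (-1) ^ dist_path A c w * walk_weight A c (dist_path A c w) w"
    by (rule walk_weight_laplacian_eq_signed[OF nonneg noloop]) (rule dist_path_lt_length)
  ultimately show ?thesis by simp
qed

theorem corollary2:
  fixes A :: "real^'n^'n" and a b p q :: "real poly" and c ob :: 'n
  assumes nonneg: "\<forall>i j. A $ i $ j \<ge> 0"
    and noloop: "\<forall>i. A $ i $ i = 0"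
    and nz: "a \<noteq> 0" "b \<noteq> 0" "p \<noteq> 0" "q \<noteq> 0"
    and strictly_proper: "degree (b * q) < degree (a * p)"
    and path: "\<exists>vs. is_dpath A c ob vs"
  shows "rel_deg (transfer (openloop a b p q) (laplacian A) c ob)
         = (int (dist_path A c ob) + 1) * (int (degree (a * p)) - int (degree (b * q)))"
proof -
  have "b * q \<noteq> 0" "a * p \<noteq> 0" using nz by auto
  hence val_M: "val_inf (openloop a b p q) = int (degree (a * p)) - int (degree (b * q))"
    unfolding openloop_def by (rule val_inf_Fract)
  obtain vs where "is_dpath A c ob vs" using path by blast
  have "transfer (openloop a b p q) (laplacian A) c ob \<noteq> 0 \<and>
        val_inf (transfer (openloop a b p q) (laplacian A) c ob)
          = (int (dist_path A c ob) + 1) * val_inf (openloop a b p q)"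
  proof (rule val_inf_transfer)
    show "1 \<le> val_inf (openloop a b p q)" using val_M strictly_proper by simp
  qed (use walk_weight_laplacian_below_dist[OF nonneg]
         walk_weight_laplacian_at_dist[OF nonneg noloop \<open>is_dpath A c ob vs\<close>] in auto)
  thus ?thesis using rel_deg_eq_val_inf val_M by simp
qed

end
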